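(* For cycles we have $f^-(C_3)=f^-(C_5)=0$, and for every odd $n\ge 7$, $f^-(C_n)=n-5$.
   Context: All graphs are finite, simple, undirected and connected. $N[v]=N(v)\cup\{v\}$ is the closed neighbourhood. A chromatic colouring of $G$ is a proper vertex colouring $c:V(G)\to\{c_1,\dots,c_{\chi(G)}\}$. With respect to $c$, a vertex $v$ yields a rainbow neighbourhood if $N[v]$ contains a vertex of each colour $c_1,\dots,c_{\chi(G)}$; $r_\chi(G)$ is the number of such vertices, and $r^-_\chi(G)$, $r^+_\chi(G)$ are its minimum and maximum over all chromatic colourings of $G$. Fading: for a set $F\subseteq V(G)$ (a fade set), the vertices of $F$ receive a transparent colour $c^\circ$ not among $c_1,\dots,c_{\chi(G)}$; after fading, $v$ yields a rainbow neighbourhood iff for every $i$ some vertex of $N[v]\setminus F$ has colour $c_i$. The fading number $f^-(G)$ is the maximum $|F|$ over chromatic colourings $c$ attaining $r_\chi=r^-_\chi(G)$ and fade sets $F$ such that, after fading $F$, the number of vertices yielding rainbow neighbourhoods is still $r^-_\chi(G)$; $f^+(G)$ is defined analogously with $r^+_\chi(G)$. *)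

theory Defs
  imports Main
begin

text \<open>A graph is given by a finite vertex set V and a symmetric irreflexive
adjacency relation E. Colours c_1,...,c_k are represented by the naturals 0,...,k-1.\<close>

definition cnbhd :: "'a set \<Rightarrow> ('a \<Rightarrow> 'a \<Rightarrow> bool) \<Rightarrow> 'a \<Rightarrow> 'a set" where
  "cnbhd V E v = {u \<in> V. u = v \<or> E v u}"

definition proper_colouring :: "'a set \<Rightarrow> ('a \<Rightarrow> 'a \<Rightarrow> bool) \<Rightarrow> nat \<Rightarrow> ('a \<Rightarrow> nat) \<Rightarrow> bool" where
  "proper_colouring V E k c \<longleftrightarrow> (\<forall>v\<in>V. c v < k) \<and> (\<forall>u\<in>V. \<forall>v\<in>V. E u v \<longrightarrow> c u \<noteq> c v)"

definition chromatic_number :: "'a set \<Rightarrow> ('a \<Rightarrow> 'a \<Rightarrow> bool) \<Rightarrow> nat" where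
  "chromatic_number V E = (LEAST k. \<exists>c. proper_colouring V E k c)"

definition chromatic_colouring :: "'a set \<Rightarrow> ('a \<Rightarrow> 'a \<Rightarrow> bool) \<Rightarrow> ('a \<Rightarrow> nat) \<Rightarrow> bool" where
  "chromatic_colouring V E c \<longleftrightarrow> proper_colouring V E (chromatic_number V E) c"

definition rainbow_faded :: "'a set \<Rightarrow> ('a \<Rightarrow> 'a \<Rightarrow> bool) \<Rightarrow> ('a \<Rightarrow> nat) \<Rightarrow> 'a set \<Rightarrow> 'a \<Rightarrow> bool" where
  "rainbow_faded V E c F v \<longleftrightarrow>
     (\<forall>i < chromatic_number V E. \<exists>u \<in> cnbhd V E v - F. c u = i)"

definition rainbow_count :: "'a set \<Rightarrow> ('a \<Rightarrow> 'a \<Rightarrow> bool) \<Rightarrow> ('a \<Rightarrow> nat) \<Rightarrow> 'a set \<Rightarrow> nat" where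
  "rainbow_count V E c F = card {v \<in> V. rainbow_faded V E c F v}"

definition r_minus :: "'a set \<Rightarrow> ('a \<Rightarrow> 'a \<Rightarrow> bool) \<Rightarrow> nat" where
  "r_minus V E = Min {rainbow_count V E c {} | c. chromatic_colouring V E c}"

definition fading_minus :: "'a set \<Rightarrow> ('a \<Rightarrow> 'a \<Rightarrow> bool) \<Rightarrow> nat" where
  "fading_minus V E = Max {card F | c F. chromatic_colouring V E c
       \<and> rainbow_count V E c {} = r_minus V E
       \<and> F \<subseteq> V \<and> rainbow_count V E c F = r_minus V E}"

definition cycle_adj :: "nat \<Rightarrow> nat \<Rightarrow> nat \<Rightarrow> bool" where
  "cycle_adj n i j \<longleftrightarrow> i < n \<and> j < n \<and> (j = (i + 1) mod n \<or> i = (j + 1) mod n)"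

end

theory Submission
  imports Defs "HOL-Number_Theory.Cong"
begin

text \<open>On an odd cycle \<chi> = 3, every closed neighbourhood has exactly three vertices, and a vertex
  yields a rainbow neighbourhood iff its two neighbours differ in colour. Walking around the cycle in
  steps of two (which visits every vertex, n being odd), the colour can only change when stepping over
  a rainbow vertex; since all three colours occur, there are at least three rainbow vertices, and the
  colouring 0,1,0,1,...,0,1,2 has exactly three, at n-2, n-1 and 0. Fading a vertex in the closed
  neighbourhood of a rainbow vertex destroys its rainbow, so a fade set keeping the minimum must avoid
  the closed neighbourhoods of the three rainbow vertices, which cover at least min 5 n vertices;
  for the colouring above the n - 5 vertices 2, ..., n-4 avoid them.\<close>

lemma rainbow_faded_antimono:
  "F \<subseteq> G \<Longrightarrow> rainbow_faded V E c G v \<Longrightarrow> rainbow_faded V E c F v"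
  unfolding rainbow_faded_def by blast

lemma rainbow_faded_disjoint_cnbhd:
  "cnbhd V E v \<inter> F = {} \<Longrightarrow> rainbow_faded V E c F v \<longleftrightarrow> rainbow_faded V E c {} v"
  unfolding rainbow_faded_def by (simp add: Diff_triv)

text \<open>A closed neighbourhood with no more vertices than colours needs every one of them.\<close>
lemma rainbow_faded_imp_disjoint_cnbhd:
  assumes "finite V" "card (cnbhd V E v) \<le> chromatic_number V E"
    and "rainbow_faded V E c F v"
  shows "cnbhd V E v \<inter> F = {}"
proof (rule ccontr)
  let ?N = "cnbhd V E v"
  assume "?N \<inter> F \<noteq> {}"
  have fin: "finite ?N" using assms(1) unfolding cnbhd_def by simp
  have "{..<chromatic_number V E} \<subseteq> c ` (?N - F)"
    using assms(3) unfolding rainbow_faded_def by blast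
  then have "chromatic_number V E \<le> card (?N - F)"
    by (metis card_lessThan card_image_le card_mono fin finite_Diff finite_imageI le_trans)
  also have "\<dots> < card ?N"
    using fin \<open>?N \<inter> F \<noteq> {}\<close> by (intro psubset_card_mono) auto
  finally show False using assms(2) by simp
qed

lemma rainbow_set_fade_eq:
  assumes "finite V" "rainbow_count V E c F = rainbow_count V E c {}"
  shows "{v \<in> V. rainbow_faded V E c F v} = {v \<in> V. rainbow_faded V E c {} v}"
  using assms rainbow_faded_antimono[of "{}" F]
  unfolding rainbow_count_def by (intro card_subset_eq) auto

lemma card_fade_set_le:
  assumes "finite V" "F \<subseteq> V" "\<And>v. v \<in> V \<Longrightarrow> card (cnbhd V E v) \<le> chromatic_number V E"
    and "rainbow_count V E c F = rainbow_count V E c {}"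
  shows "card F + card (\<Union>v \<in> {v \<in> V. rainbow_faded V E c {} v}. cnbhd V E v) \<le> card V"
proof -
  let ?U = "\<Union>v \<in> {v \<in> V. rainbow_faded V E c {} v}. cnbhd V E v"
  have "F \<inter> ?U = {}"
    using rainbow_faded_imp_disjoint_cnbhd[OF assms(1) assms(3)] rainbow_set_fade_eq[OF assms(1,4)]
    by blast
  moreover have "?U \<subseteq> V" unfolding cnbhd_def by blast
  ultimately have "card (F \<union> ?U) \<le> card V"
    using assms(1,2) by (intro card_mono) auto
  then show ?thesis
    using assms(1,2) \<open>F \<inter> ?U = {}\<close> \<open>?U \<subseteq> V\<close>
    by (metis card_Un_disjoint finite_subset)
qed

lemma rainbow_count_fade_disjoint:
  assumes "\<And>v. v \<in> V \<Longrightarrow> rainbow_faded V E c {} v \<Longrightarrow> cnbhd V E v \<inter> F = {}"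
  shows "rainbow_count V E c F = rainbow_count V E c {}"
  unfolding rainbow_count_def
  using assms rainbow_faded_disjoint_cnbhd rainbow_faded_antimono[of "{}" F]
  by (metis (no_types, lifting) empty_subsetI)

lemma rainbow_count_le: "finite V \<Longrightarrow> rainbow_count V E c F \<le> card V"
  unfolding rainbow_count_def by (intro card_mono) auto

lemma r_minus_eqI:
  assumes "finite V" "\<And>c. chromatic_colouring V E c \<Longrightarrow> r \<le> rainbow_count V E c {}"
    and "chromatic_colouring V E c\<^sub>0" "rainbow_count V E c\<^sub>0 {} = r"
  shows "r_minus V E = r"
  unfolding r_minus_def
proof (rule Min_eqI)
  show "finite {rainbow_count V E c {} | c. chromatic_colouring V E c}"
    by (rule finite_subset[of _ "{..card V}"]) (auto simp: rainbow_count_le assms(1))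
qed (use assms in auto)

lemma fading_minus_eqI:
  assumes "finite V"
    and "\<And>c F. chromatic_colouring V E c \<Longrightarrow> rainbow_count V E c {} = r_minus V E \<Longrightarrow>
          F \<subseteq> V \<Longrightarrow> rainbow_count V E c F = r_minus V E \<Longrightarrow> card F \<le> m"
    and "chromatic_colouring V E c\<^sub>0" "rainbow_count V E c\<^sub>0 {} = r_minus V E"
    and "F\<^sub>0 \<subseteq> V" "rainbow_count V E c\<^sub>0 F\<^sub>0 = r_minus V E" "card F\<^sub>0 = m"
  shows "fading_minus V E = m"
  unfolding fading_minus_def
proof (rule Max_eqI)
  show "finite {card F | c F. chromatic_colouring V E c \<and> rainbow_count V E c {} = r_minus V E
      \<and> F \<subseteq> V \<and> rainbow_count V E c F = r_minus V E}"
    by (rule finite_subset[of _ "{..card V}"]) (auto intro: card_mono assms(1))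
qed (use assms in blast)+

definition cycle_succ :: "nat \<Rightarrow> nat \<Rightarrow> nat" where
  "cycle_succ n v = (v + 1) mod n"

definition cycle_pred :: "nat \<Rightarrow> nat \<Rightarrow> nat" where
  "cycle_pred n v = (v + n - 1) mod n"

lemma cycle_succ_less [simp]: "v < n \<Longrightarrow> cycle_succ n v < n"
  unfolding cycle_succ_def by simp

lemma cycle_pred_less [simp]: "v < n \<Longrightarrow> cycle_pred n v < n"
  unfolding cycle_pred_def by simp

lemma cycle_succ_pred [simp]: "v < n \<Longrightarrow> cycle_succ n (cycle_pred n v) = v"
  unfolding cycle_succ_def cycle_pred_def by (cases "v = 0") (auto simp: mod_if)

lemma cycle_pred_succ [simp]: "v < n \<Longrightarrow> cycle_pred n (cycle_succ n v) = v"
  unfolding cycle_succ_def cycle_pred_def by (cases "v + 1 = n") auto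

lemma cycle_succ_eq: "v + 1 < n \<Longrightarrow> cycle_succ n v = v + 1"
  unfolding cycle_succ_def by simp

lemma cycle_succ_last: "0 < n \<Longrightarrow> cycle_succ n (n - 1) = 0"
  unfolding cycle_succ_def by simp

lemma cycle_pred_eq: "0 < v \<Longrightarrow> v < n \<Longrightarrow> cycle_pred n v = v - 1"
  unfolding cycle_pred_def by (simp add: less_diff_conv mod_if)

lemma cycle_pred_0: "0 < n \<Longrightarrow> cycle_pred n 0 = n - 1"
  unfolding cycle_pred_def by simp

lemma cycle_adj_iff:
  "cycle_adj n u v \<longleftrightarrow> u < n \<and> v < n \<and> (v = cycle_succ n u \<or> u = cycle_succ n v)"
  unfolding cycle_adj_def cycle_succ_def ..

lemma cnbhd_cycle:
  assumes "v < n"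
  shows "cnbhd {0..<n} (cycle_adj n) v = {cycle_pred n v, v, cycle_succ n v}"
proof -
  have "v = cycle_succ n u \<longleftrightarrow> u = cycle_pred n v" if "u < n" for u
    using assms that cycle_succ_pred cycle_pred_succ by metis
  then show ?thesis
    using assms unfolding cnbhd_def cycle_adj_iff by auto
qed

lemma card_cnbhd_cycle_le: "v < n \<Longrightarrow> card (cnbhd {0..<n} (cycle_adj n) v) \<le> 3"
  unfolding cnbhd_cycle by (simp add: card_insert_if)

lemma proper_colouring_cycle_iff:
  "proper_colouring {0..<n} (cycle_adj n) k c \<longleftrightarrow>
     (\<forall>v<n. c v < k) \<and> (\<forall>v<n. c (cycle_succ n v) \<noteq> c v)"
proof -
  have "(\<forall>u\<in>{0..<n}. \<forall>v\<in>{0..<n}. cycle_adj n u v \<longrightarrow> c u \<noteq> c v) \<longleftrightarrow>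
        (\<forall>v<n. c (cycle_succ n v) \<noteq> c v)"
    unfolding cycle_adj_iff by (metis atLeastLessThan_iff cycle_succ_less zero_le)
  then show ?thesis unfolding proper_colouring_def by auto
qed

lemma cycle_walk_induct:
  fixes d n x j :: nat
  assumes "coprime d n" "x < n" "j < n" "P x"
    and step: "\<And>v. v < n \<Longrightarrow> P v \<Longrightarrow> P ((v + d) mod n)"
  shows "P j"
proof -
  have walk: "P ((x + d * m) mod n)" for m
  proof (induction m)
    case (Suc m)
    have "(x + d * Suc m) mod n = ((x + d * m) mod n + d) mod n"
      by (simp add: mod_simps algebra_simps)
    with Suc step[of "(x + d * m) mod n"] assms(2) show ?case by simp
  qed (use assms in simp)
  obtain m where "[d * m = j + n - x] (mod n)"
    using cong_solve_dvd_nat[of d n "j + n - x"] assms(1) by auto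
  then have "(x + d * m) mod n = (x + (j + n - x)) mod n"
    unfolding cong_def by (metis mod_add_right_eq)
  also have "\<dots> = j" using assms(2,3) by simp
  finally show ?thesis using walk by metis
qed

lemma cycle_succ_succ: "cycle_succ n (cycle_succ n v) = (v + 2) mod n"
  unfolding cycle_succ_def by (simp add: mod_simps)

text \<open>With at most two colours c (v + 2) = c v, so walking in steps of two spreads the colour
  of vertex 0 over the whole odd cycle, including its successor.\<close>
lemma odd_cycle_colours_card_gt_2:
  assumes "odd n" "\<forall>v<n. c (cycle_succ n v) \<noteq> c v"
  shows "2 < card (c ` {0..<n})"
proof (rule ccontr)
  assume "\<not> 2 < card (c ` {0..<n})"
  have n: "0 < n" using assms(1) by (rule odd_pos)
  have return: "c ((v + 2) mod n) = c v" if v: "v < n" for v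
  proof (rule ccontr)
    let ?s = "cycle_succ n"
    assume "c ((v + 2) mod n) \<noteq> c v"
    moreover have "c (?s (?s v)) \<noteq> c (?s v)" "c (?s v) \<noteq> c v"
      using assms(2) v by simp_all
    ultimately have "card {c v, c (?s v), c (?s (?s v))} = 3"
      by (simp add: cycle_succ_succ)
    moreover have "{c v, c (?s v), c (?s (?s v))} \<subseteq> c ` {0..<n}"
      using v by auto
    ultimately have "3 \<le> card (c ` {0..<n})" by (metis card_mono finite_atLeastLessThan finite_imageI)
    with \<open>\<not> 2 < card (c ` {0..<n})\<close> show False by simp
  qed
  have "c (cycle_succ n 0) = c 0"
    by (rule cycle_walk_induct[where d = 2 and x = 0]) (use assms(1) n return in auto)
  with assms(2) n show False by simp
qed

definition odd_cycle_colouring :: "nat \<Rightarrow> nat \<Rightarrow> nat" where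
  "odd_cycle_colouring n v = (if v = n - 1 then 2 else v mod 2)"

lemma proper_odd_cycle_colouring:
  assumes "odd n" "3 \<le> n"
  shows "proper_colouring {0..<n} (cycle_adj n) 3 (odd_cycle_colouring n)"
  unfolding proper_colouring_cycle_iff
proof (intro conjI allI impI)
  fix v assume v: "v < n"
  show "odd_cycle_colouring n v < 3"
    unfolding odd_cycle_colouring_def mod2_eq_if by simp
  consider "v = n - 1" | "v = n - 2" | "v + 2 < n" using v by linarith
  then show "odd_cycle_colouring n (cycle_succ n v) \<noteq> odd_cycle_colouring n v"
  proof cases
    case 1
    then show ?thesis using assms cycle_succ_last[of n] by (simp add: odd_cycle_colouring_def)
  next
    case 2
    then have "odd v" using assms by simp
    with 2 assms show ?thesis by (simp add: cycle_succ_eq odd_cycle_colouring_def mod2_eq_if)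
  next
    case 3
    then show ?thesis by (auto simp: cycle_succ_eq odd_cycle_colouring_def mod_Suc)
  qed
qed

lemma chromatic_number_odd_cycle:
  assumes "odd n" "3 \<le> n"
  shows "chromatic_number {0..<n} (cycle_adj n) = 3"
  unfolding chromatic_number_def
proof (rule Least_equality)
  show "\<exists>c. proper_colouring {0..<n} (cycle_adj n) 3 c"
    using proper_odd_cycle_colouring[OF assms] by blast
next
  fix k assume "\<exists>c. proper_colouring {0..<n} (cycle_adj n) k c"
  then obtain c where c: "\<forall>v<n. c v < k" "\<forall>v<n. c (cycle_succ n v) \<noteq> c v"
    unfolding proper_colouring_cycle_iff by blast
  have "c ` {0..<n} \<subseteq> {..<k}" using c(1) by auto
  then have "card (c ` {0..<n}) \<le> k" by (metis card_lessThan card_mono finite_lessThan)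
  with odd_cycle_colours_card_gt_2[OF assms(1) c(2)] show "3 \<le> k" by simp
qed

lemma chromatic_colouring_odd_cycle_iff:
  "odd n \<Longrightarrow> 3 \<le> n \<Longrightarrow>
    chromatic_colouring {0..<n} (cycle_adj n) c \<longleftrightarrow> proper_colouring {0..<n} (cycle_adj n) 3 c"
  unfolding chromatic_colouring_def by (simp add: chromatic_number_odd_cycle)

lemma all_less_3_covered_iff:
  fixes x y z :: nat
  assumes "x < 3" "y < 3" "z < 3" "x \<noteq> y" "y \<noteq> z"
  shows "(\<forall>i<3. i = x \<or> i = y \<or> i = z) \<longleftrightarrow> x \<noteq> z"
  using assms by (auto simp: less_Suc_eq numeral_eq_Suc)

lemma rainbow_odd_cycle_iff:
  assumes "odd n" "3 \<le> n" "proper_colouring {0..<n} (cycle_adj n) 3 c" "v < n"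
  shows "rainbow_faded {0..<n} (cycle_adj n) c {} v \<longleftrightarrow>
    c (cycle_pred n v) \<noteq> c (cycle_succ n v)"
proof -
  let ?p = "cycle_pred n v" and ?s = "cycle_succ n v"
  have colours: "c ?p < 3" "c v < 3" "c ?s < 3" "c ?s \<noteq> c v"
    using assms(3,4) unfolding proper_colouring_cycle_iff by simp_all
  have "c v \<noteq> c ?p"
    using assms(3,4) unfolding proper_colouring_cycle_iff by (metis cycle_pred_less cycle_succ_pred)
  have "rainbow_faded {0..<n} (cycle_adj n) c {} v \<longleftrightarrow> (\<forall>i<3. i = c ?p \<or> i = c v \<or> i = c ?s)"
    unfolding rainbow_faded_def chromatic_number_odd_cycle[OF assms(1,2)] cnbhd_cycle[OF assms(4)]
    by blast
  also have "\<dots> \<longleftrightarrow> c ?p \<noteq> c ?s"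
    using colours \<open>c v \<noteq> c ?p\<close> by (intro all_less_3_covered_iff) auto
  finally show ?thesis .
qed

lemma rainbow_set_odd_cycle_colouring:
  assumes "odd n" "3 \<le> n"
  shows "{v \<in> {0..<n}. rainbow_faded {0..<n} (cycle_adj n) (odd_cycle_colouring n) {} v}
    = {n - 2, n - 1, 0}"
proof -
  let ?c = "odd_cycle_colouring n"
  have iff: "?c (cycle_pred n v) \<noteq> ?c (cycle_succ n v) \<longleftrightarrow> v \<in> {n - 2, n - 1, 0}" if v: "v < n" for v
  proof -
    consider "v = 0" | "v = n - 1" | "v = n - 2" | "0 < v" "v + 2 < n" using v by linarith
    then show ?thesis
    proof cases
      case 1
      then show ?thesis using assms cycle_pred_0[of n] by (simp add: cycle_succ_eq odd_cycle_colouring_def)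
    next
      case 2
      then show ?thesis using assms cycle_succ_last[of n]
        by (simp add: cycle_pred_eq odd_cycle_colouring_def mod2_eq_if)
    next
      case 3
      then show ?thesis using assms
        by (simp add: cycle_pred_eq cycle_succ_eq odd_cycle_colouring_def mod2_eq_if)
    next
      case 4
      then show ?thesis
        by (auto simp: cycle_pred_eq cycle_succ_eq odd_cycle_colouring_def mod2_eq_if)
    qed
  qed
  have "{n - 2, n - 1, 0} \<subseteq> {0..<n}" using assms(2) by auto
  then show ?thesis
    using iff rainbow_odd_cycle_iff[OF assms proper_odd_cycle_colouring[OF assms]] by auto
qed

text \<open>Walking by two steps, the colour can only change when passing over a rainbow vertex.\<close>
lemma odd_cycle_colours_subset_rainbow:
  assumes "odd n" "3 \<le> n" "proper_colouring {0..<n} (cycle_adj n) 3 c" "x < n"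
  shows "c ` {0..<n} \<subseteq>
    insert (c x) ((\<lambda>r. c (cycle_succ n r)) ` {v \<in> {0..<n}. rainbow_faded {0..<n} (cycle_adj n) c {} v})"
    (is "_ \<subseteq> ?S")
proof
  fix a assume "a \<in> c ` {0..<n}"
  then obtain j where "j < n" "a = c j" by auto
  have "c j \<in> ?S"
  proof (rule cycle_walk_induct[where d = 2 and x = x and P = "\<lambda>v. c v \<in> ?S"])
    fix v assume v: "v < n" "c v \<in> ?S"
    let ?s = "cycle_succ n v"
    show "c ((v + 2) mod n) \<in> ?S"
    proof (cases "rainbow_faded {0..<n} (cycle_adj n) c {} ?s")
      case True
      with v(1) have "?s \<in> {v \<in> {0..<n}. rainbow_faded {0..<n} (cycle_adj n) c {} v}" by simp
      then have "c (cycle_succ n ?s) \<in> ?S" by blast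
      then show ?thesis by (simp only: cycle_succ_succ)
    next
      case False
      then have "c v = c (cycle_succ n ?s)"
        using rainbow_odd_cycle_iff[OF assms(1-3), of ?s] v(1) by simp
      then show ?thesis using v(2) by (simp add: cycle_succ_succ)
    qed
  qed (use assms \<open>j < n\<close> in auto)
  then show "a \<in> ?S" using \<open>a = c j\<close> by simp
qed

lemma card_rainbow_set_odd_cycle_ge:
  assumes "odd n" "3 \<le> n" "proper_colouring {0..<n} (cycle_adj n) 3 c"
  shows "3 \<le> card {v \<in> {0..<n}. rainbow_faded {0..<n} (cycle_adj n) c {} v}"
    (is "_ \<le> card ?R")
proof -
  have gt2: "2 < card (c ` {0..<n})"
    using assms(3) by (intro odd_cycle_colours_card_gt_2[OF assms(1)]) (simp add: proper_colouring_cycle_iff)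
  have "?R \<noteq> {}"
  proof
    assume "?R = {}"
    then have "card (c ` {0..<n}) \<le> card {c 0}"
      using odd_cycle_colours_subset_rainbow[OF assms, of 0] assms(2) by (intro card_mono) auto
    with gt2 show False by simp
  qed
  then obtain a where a: "a \<in> ?R" by blast
  then have "c ` {0..<n} \<subseteq> (\<lambda>r. c (cycle_succ n r)) ` ?R"
    using odd_cycle_colours_subset_rainbow[OF assms, of "cycle_succ n a"] by auto
  then have "card (c ` {0..<n}) \<le> card ((\<lambda>r. c (cycle_succ n r)) ` ?R)"
    by (intro card_mono) auto
  also have "\<dots> \<le> card ?R"
    by (rule card_image_le) simp
  finally show ?thesis using gt2 by simp
qed

lemma r_minus_odd_cycle:
  assumes "odd n" "3 \<le> n"
  shows "r_minus {0..<n} (cycle_adj n) = 3"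
proof (rule r_minus_eqI)
  show "chromatic_colouring {0..<n} (cycle_adj n) (odd_cycle_colouring n)"
    using assms by (simp add: chromatic_colouring_odd_cycle_iff proper_odd_cycle_colouring)
  show "rainbow_count {0..<n} (cycle_adj n) (odd_cycle_colouring n) {} = 3"
    using assms unfolding rainbow_count_def rainbow_set_odd_cycle_colouring[OF assms] by simp
next
  fix c assume "chromatic_colouring {0..<n} (cycle_adj n) c"
  then show "3 \<le> rainbow_count {0..<n} (cycle_adj n) c {}"
    unfolding rainbow_count_def chromatic_colouring_odd_cycle_iff[OF assms]
    by (rule card_rainbow_set_odd_cycle_ge[OF assms])
qed simp

lemma card_Un_cycle_succ_image_ge:
  assumes "X \<subseteq> {0..<n}" "X \<noteq> {}"
  shows "min (card X + 1) n \<le> card (X \<union> cycle_succ n ` X)"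
proof (cases "cycle_succ n ` X \<subseteq> X")
  case True
  obtain x where "x \<in> X" using assms(2) by blast
  have "{0..<n} \<subseteq> X"
  proof
    fix j assume "j \<in> {0..<n}"
    show "j \<in> X"
      by (rule cycle_walk_induct[where d = 1 and x = x])
        (use True assms(1) \<open>x \<in> X\<close> \<open>j \<in> {0..<n}\<close> in \<open>auto simp: cycle_succ_def\<close>)
  qed
  then have "card {0..<n} \<le> card (X \<union> cycle_succ n ` X)"
    using assms(1) finite_subset by (intro card_mono) auto
  then have "n \<le> card (X \<union> cycle_succ n ` X)" by simp
  then show ?thesis by simp
next
  case False
  then obtain y where y: "y \<in> cycle_succ n ` X" "y \<notin> X" by blast
  have "finite X" using assms(1) finite_subset by blast
  then have "card X + 1 = card (insert y X)" using y(2) by simp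
  also have "\<dots> \<le> card (X \<union> cycle_succ n ` X)"
    using \<open>finite X\<close> y(1) by (intro card_mono) auto
  finally show ?thesis by simp
qed

text \<open>The closed neighbourhoods of R are obtained from the predecessors of R by applying
  X \<mapsto> X \<union> succ X twice, and each application adds a vertex unless everything is covered.\<close>
lemma card_Union_cnbhd_cycle_ge:
  assumes "R \<subseteq> {0..<n}" "card R = 3"
  shows "min 5 n \<le> card (\<Union>v \<in> R. cnbhd {0..<n} (cycle_adj n) v)"
proof -
  let ?s = "cycle_succ n" and ?p = "cycle_pred n"
  define X1 where "X1 = ?p ` R \<union> ?s ` ?p ` R"
  have R_ne: "R \<noteq> {}" using assms(2) by auto
  have "inj_on ?p R"
    using assms(1) by (intro inj_on_inverseI[where g = ?s]) auto
  then have "card (?p ` R) = 3" using assms(2) by (simp add: card_image)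
  moreover have "?p ` R \<subseteq> {0..<n}" using assms(1) by auto
  ultimately have "min 4 n \<le> card X1"
    unfolding X1_def using card_Un_cycle_succ_image_ge[of "?p ` R" n] R_ne by simp
  moreover have "X1 \<subseteq> {0..<n}" "X1 \<noteq> {}"
    using assms(1) R_ne unfolding X1_def by auto
  ultimately have "min 5 n \<le> card (X1 \<union> ?s ` X1)"
    using card_Un_cycle_succ_image_ge[of X1 n] by simp
  also have "X1 \<union> ?s ` X1 = (\<Union>v \<in> R. cnbhd {0..<n} (cycle_adj n) v)"
  proof -
    have "?s ` ?p ` R = R" using assms(1) by (force simp: image_image)
    then have "X1 \<union> ?s ` X1 = ?p ` R \<union> R \<union> ?s ` R"
      unfolding X1_def by auto
    also have "\<dots> = (\<Union>v \<in> R. {?p v, v, ?s v})" by blast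
    also have "\<dots> = (\<Union>v \<in> R. cnbhd {0..<n} (cycle_adj n) v)"
      using assms(1) by (intro SUP_cong) (auto simp: cnbhd_cycle)
    finally show ?thesis .
  qed
  finally show ?thesis .
qed

lemma fading_minus_odd_cycle:
  assumes "odd n" "3 \<le> n"
  shows "fading_minus {0..<n} (cycle_adj n) = n - 5"
proof (rule fading_minus_eqI)
  fix c F
  assume c: "chromatic_colouring {0..<n} (cycle_adj n) c"
    and r0: "rainbow_count {0..<n} (cycle_adj n) c {} = r_minus {0..<n} (cycle_adj n)"
    and F: "F \<subseteq> {0..<n}" and rF: "rainbow_count {0..<n} (cycle_adj n) c F = r_minus {0..<n} (cycle_adj n)"
  let ?R = "{v \<in> {0..<n}. rainbow_faded {0..<n} (cycle_adj n) c {} v}"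
  have "card F + card (\<Union>v \<in> ?R. cnbhd {0..<n} (cycle_adj n) v) \<le> n"
    using card_fade_set_le[OF _ F, where c = c] card_cnbhd_cycle_le chromatic_number_odd_cycle[OF assms] r0 rF
    by simp
  moreover have "card ?R = 3"
    using r0 r_minus_odd_cycle[OF assms] unfolding rainbow_count_def by simp
  then have "min 5 n \<le> card (\<Union>v \<in> ?R. cnbhd {0..<n} (cycle_adj n) v)"
    by (intro card_Union_cnbhd_cycle_ge) auto
  ultimately show "card F \<le> n - 5" by linarith
next
  let ?c = "odd_cycle_colouring n"
  show "chromatic_colouring {0..<n} (cycle_adj n) ?c"
    using assms by (simp add: chromatic_colouring_odd_cycle_iff proper_odd_cycle_colouring)
  show r0: "rainbow_count {0..<n} (cycle_adj n) ?c {} = r_minus {0..<n} (cycle_adj n)"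
    using assms unfolding rainbow_count_def rainbow_set_odd_cycle_colouring[OF assms]
    by (simp add: r_minus_odd_cycle)
  have "cnbhd {0..<n} (cycle_adj n) v \<inter> {2..<n - 3} = {}" if "v \<in> {n - 2, n - 1, 0}" for v
    using that assms cycle_succ_last[of n] cycle_pred_0[of n]
    by (auto simp: cnbhd_cycle cycle_pred_eq cycle_succ_eq)
  then have "rainbow_count {0..<n} (cycle_adj n) ?c {2..<n - 3} = rainbow_count {0..<n} (cycle_adj n) ?c {}"
    using rainbow_set_odd_cycle_colouring[OF assms] by (intro rainbow_count_fade_disjoint) blast
  with r0 show "rainbow_count {0..<n} (cycle_adj n) ?c {2..<n - 3} = r_minus {0..<n} (cycle_adj n)"
    by simp
qed auto

theorem proposition2p2:
  shows "fading_minus {0..<3} (cycle_adj 3) = 0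
       \<and> fading_minus {0..<5} (cycle_adj 5) = 0
       \<and> (\<forall>n::nat. odd n \<and> n \<ge> 7 \<longrightarrow> fading_minus {0..<n} (cycle_adj n) = n - 5)"
  using fading_minus_odd_cycle[of 3] fading_minus_odd_cycle[of 5] fading_minus_odd_cycle by auto

end
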